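(* Let $\mathcal{X},\mathcal{Y}$ be finite sets with $2\le|\mathcal{X}|,|\mathcal{Y}|<\infty$ and $P_{X,Y}$ a joint pmf on $\mathcal{X}\times\mathcal{Y}$ with $P_X(x)>0$ for all $x$ and $P_Y(y)>0$ for all $y$. If $(X_1,Y_1),\dots,(X_n,Y_n)$ are i.i.d. with joint pmf $P_{X,Y}$, then $$\eta_{\chi^2}(P_{X_1^n},P_{Y_1^n|X_1^n})\le\eta_{\mathrm{KL}}(P_{X_1^n},P_{Y_1^n|X_1^n})\le\frac{\eta_{\chi^2}(P_{X_1^n},P_{Y_1^n|X_1^n})}{\min_{x\in\mathcal{X}}P_X(x)}.$$
   Context: $X_1^n=(X_1,\dots,X_n)$, $Y_1^n=(Y_1,\dots,Y_n)$. For a pair of finite-valued random variables $(U,V)$ with channel matrix $W$ of $P_{V|U}$ (column $u$ equal to $P_{V|U=u}$), the contraction coefficient for a divergence $D_\bullet$ is $\eta_\bullet(P_U,P_{V|U})=\sup\{D_\bullet(WR_U\|WP_U)/D_\bullet(R_U\|P_U): R_U \text{ a pmf},\ 0<D_\bullet(R_U\|P_U)<\infty\}$. $\eta_{\mathrm{KL}}$ uses the KL divergence $D(R\|P)=\sum R\log(R/P)$ (natural log) and $\eta_{\chi^2}$ uses $\chi^2(R\|P)=\sum (R-P)^2/P$. *)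

theory Defs
  imports "HOL-Analysis.Analysis" "HOL-Library.Extended_Real"
begin

definition is_pmf :: "'u set \<Rightarrow> ('u \<Rightarrow> real) \<Rightarrow> bool" where
  "is_pmf U R \<longleftrightarrow> (\<forall>u\<in>U. 0 \<le> R u) \<and> (\<Sum>u\<in>U. R u) = 1"

definition kl_div :: "'u set \<Rightarrow> ('u \<Rightarrow> real) \<Rightarrow> ('u \<Rightarrow> real) \<Rightarrow> ereal" where
  "kl_div U R P =
     (if \<exists>u\<in>U. R u > 0 \<and> P u = 0 then \<infinity>
      else ereal (\<Sum>u\<in>U. if R u = 0 then 0 else R u * ln (R u / P u)))"

definition chi2_div :: "'u set \<Rightarrow> ('u \<Rightarrow> real) \<Rightarrow> ('u \<Rightarrow> real) \<Rightarrow> ereal" where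
  "chi2_div U R P =
     (if \<exists>u\<in>U. R u \<noteq> P u \<and> P u = 0 then \<infinity>
      else ereal (\<Sum>u\<in>U. if P u = 0 then 0 else (R u - P u)^2 / P u))"

text \<open>Output distribution W R of channel W (W u v = P_{V|U}(v|u)) on input R.\<close>
definition channel_out :: "'u set \<Rightarrow> ('u \<Rightarrow> 'v \<Rightarrow> real) \<Rightarrow> ('u \<Rightarrow> real) \<Rightarrow> ('v \<Rightarrow> real)" where
  "channel_out U W R = (\<lambda>v. \<Sum>u\<in>U. W u v * R u)"

text \<open>Contraction coefficients (as extended reals; supremum of the empty set is -infinity).\<close>
definition eta_KL :: "'u set \<Rightarrow> 'v set \<Rightarrow> ('u \<Rightarrow> real) \<Rightarrow> ('u \<Rightarrow> 'v \<Rightarrow> real) \<Rightarrow> ereal" where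
  "eta_KL U V PU W = Sup {kl_div V (channel_out U W R) (channel_out U W PU) / kl_div U R PU
      | R. is_pmf U R \<and> 0 < kl_div U R PU \<and> kl_div U R PU < \<infinity>}"

definition eta_chi2 :: "'u set \<Rightarrow> 'v set \<Rightarrow> ('u \<Rightarrow> real) \<Rightarrow> ('u \<Rightarrow> 'v \<Rightarrow> real) \<Rightarrow> ereal" where
  "eta_chi2 U V PU W = Sup {chi2_div V (channel_out U W R) (channel_out U W PU) / chi2_div U R PU
      | R. is_pmf U R \<and> 0 < chi2_div U R PU \<and> chi2_div U R PU < \<infinity>}"

definition marg_X :: "('a::finite \<Rightarrow> 'b::finite \<Rightarrow> real) \<Rightarrow> 'a \<Rightarrow> real" where
  "marg_X P x = (\<Sum>y\<in>UNIV. P x y)"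

definition marg_Y :: "('a::finite \<Rightarrow> 'b::finite \<Rightarrow> real) \<Rightarrow> 'b \<Rightarrow> real" where
  "marg_Y P y = (\<Sum>x\<in>UNIV. P x y)"

text \<open>n-fold i.i.d. input law P_{X_1^n} on length-n lists, and the channel P_{Y_1^n|X_1^n}.\<close>
definition seqs :: "nat \<Rightarrow> 'a list set" where
  "seqs n = {xs. length xs = n}"

definition iid_input :: "('a::finite \<Rightarrow> 'b::finite \<Rightarrow> real) \<Rightarrow> nat \<Rightarrow> 'a list \<Rightarrow> real" where
  "iid_input P n xs = (\<Prod>i<n. marg_X P (xs ! i))"

definition iid_channel :: "('a::finite \<Rightarrow> 'b::finite \<Rightarrow> real) \<Rightarrow> nat \<Rightarrow> 'a list \<Rightarrow> 'b list \<Rightarrow> real" where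
  "iid_channel P n xs ys = (\<Prod>i<n. P (xs ! i) (ys ! i) / marg_X P (xs ! i))"

end

theory Submission
  imports Defs "HOL-Real_Asymp.Real_Asymp"
begin

text \<open>For the lower bound, perturb the input law P along R - P: both KL divergences behave like
  t^2/2 times the corresponding chi-squared divergences, so every chi-squared ratio is a limit of
  KL ratios. For the upper bound, KL \<le> chi^2 always, while Pinsker's inequality gives
  chi^2(R||P_X) \<le> KL(R||P_X) / min P_X; hence the single-letter channel satisfies a KL strong data
  processing inequality with constant eta_chi2 / min P_X (capped at 1). Such inequalities tensorize
  by the chain rule, and the single-letter eta_chi2 is at most the n-letter one because an input law
  for the first letter embeds into n letters.\<close>

section \<open>Elementary inequalities\<close>

lemma diff_le_mult_ln_divide:
  fixes a m :: real
  assumes "0 \<le> a" "0 \<le> m" "a > 0 \<Longrightarrow> m > 0"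
  shows "a - m \<le> a * ln (a / m)"
proof (cases "a = 0")
  case False
  then have a: "a > 0" and m: "m > 0" using assms by auto
  have "ln (m / a) \<le> m / a - 1" using a m by (intro ln_le_minus_one) simp
  then have "a * ln (m / a) \<le> m - a" using a by (simp add: field_simps)
  moreover have "ln (a / m) = - ln (m / a)" using a m by (simp add: ln_div)
  ultimately show ?thesis by simp
qed (use assms in simp)

lemma log_sum_inequality:
  fixes a b :: "'i \<Rightarrow> real"
  assumes fin: "finite I" and a0: "\<And>i. i \<in> I \<Longrightarrow> 0 \<le> a i" and b0: "\<And>i. i \<in> I \<Longrightarrow> 0 \<le> b i"
    and ab: "\<And>i. i \<in> I \<Longrightarrow> a i > 0 \<Longrightarrow> b i > 0"
  shows "(\<Sum>i\<in>I. a i) * ln ((\<Sum>i\<in>I. a i) / (\<Sum>i\<in>I. b i)) \<le> (\<Sum>i\<in>I. a i * ln (a i / b i))"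
proof -
  define A where "A = (\<Sum>i\<in>I. a i)"
  define B where "B = (\<Sum>i\<in>I. b i)"
  have "A \<ge> 0" unfolding A_def by (rule sum_nonneg) (use a0 in auto)
  show ?thesis
  proof (cases "A = 0")
    case True
    then have "\<forall>i\<in>I. a i = 0" using sum_nonneg_eq_0_iff[OF fin, of a] a0 unfolding A_def by blast
    then show ?thesis using True unfolding A_def by simp
  next
    case False
    with \<open>A \<ge> 0\<close> have A: "A > 0" by simp
    obtain j where j: "j \<in> I" "a j > 0"
    proof (rule ccontr)
      assume "\<not> thesis"
      then have "\<forall>i\<in>I. a i \<le> 0" using that by force
      then have "A \<le> 0" unfolding A_def by (intro sum_nonpos) auto
      then show False using A by simp
    qed
    have "b j \<le> B" unfolding B_def by (rule member_le_sum) (use j b0 fin in auto)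
    then have B: "B > 0" using ab[OF j] by simp
    \<comment> \<open>Apply the termwise bound to a and the rescaled weights b * A / B, which have the same total mass.\<close>
    have "(\<Sum>i\<in>I. a i - b i * A / B) \<le> (\<Sum>i\<in>I. a i * ln (a i / (b i * A / B)))"
      by (intro sum_mono diff_le_mult_ln_divide) (use a0 b0 ab A B in auto)
    also have "\<dots> = (\<Sum>i\<in>I. a i * ln (a i / b i) - a i * ln (A / B))"
    proof (intro sum.cong refl)
      fix i assume i: "i \<in> I"
      show "a i * ln (a i / (b i * A / B)) = a i * ln (a i / b i) - a i * ln (A / B)"
      proof (cases "a i = 0")
        case False
        then have "a i > 0" "b i > 0" using a0 ab i by (auto simp: less_le)
        then have "ln (a i / (b i * A / B)) = ln (a i / b i) - ln (A / B)"
          using A B by (simp add: ln_div ln_mult)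
        then show ?thesis by (simp add: right_diff_distrib)
      qed simp
    qed
    also have "\<dots> = (\<Sum>i\<in>I. a i * ln (a i / b i)) - A * ln (A / B)"
      unfolding A_def by (simp add: sum_subtractf sum_distrib_right)
    finally show ?thesis
      using B unfolding A_def B_def
      by (simp add: sum_subtractf sum_divide_distrib[symmetric] sum_distrib_right[symmetric])
  qed
qed

lemma binary_pinsker:
  fixes a b :: real
  assumes b: "0 < b" "b \<le> a" and a1: "a \<le> 1"
  shows "2 * (a - b)^2 \<le> a * ln (a / b) + (1 - a) * ln ((1 - a) / (1 - b))"
proof -
  have quarter: "4 * x * (1 - x) \<le> 1" for x :: real
    using zero_le_power2[of "2 * x - 1"] by (simp add: power2_eq_square algebra_simps)
  \<comment> \<open>As a function of b, the difference of both sides is nonincreasing on (0, a] and vanishes at b = a.\<close>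
  show ?thesis
  proof (cases "a = 1")
    case True
    define g where "g = (\<lambda>x::real. - ln x - 2 * (1 - x)^2)"
    have "g 1 \<le> g b"
    proof (rule DERIV_nonpos_imp_nonincreasing[where f=g])
      show "b \<le> 1" using b True by simp
      fix x assume x: "b \<le> x" "x \<le> 1"
      then have x0: "x > 0" using b by simp
      have "(g has_real_derivative (- (1 / x) + 4 * (1 - x))) (at x)"
        unfolding g_def by (rule derivative_eq_intros refl | simp add: x0)+
      moreover have "4 * (1 - x) \<le> 1 / x" using quarter[of x] x0 by (simp add: field_simps)
      ultimately show "\<exists>y. (g has_real_derivative y) (at x) \<and> y \<le> 0" by force
    qed
    then show ?thesis using b True by (simp add: g_def ln_div)
  next
    case False
    then have a1': "a < 1" using a1 by simp
    define g where "g = (\<lambda>x::real. - a * ln x - (1 - a) * ln (1 - x) - 2 * (a - x)^2)"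
    have "g a \<le> g b"
    proof (rule DERIV_nonpos_imp_nonincreasing[where f=g])
      show "b \<le> a" using b by simp
      fix x assume x: "b \<le> x" "x \<le> a"
      then have x0: "x > 0" "x < 1" using b a1' by simp_all
      have "(g has_real_derivative (- (a / x) + (1 - a) / (1 - x) + 4 * (a - x))) (at x)"
        unfolding g_def by (rule derivative_eq_intros refl | simp add: x0)+
      moreover have "- (a / x) + (1 - a) / (1 - x) + 4 * (a - x) \<le> 0"
      proof -
        have xx: "x * (1 - x) > 0" using x0 by simp
        have e: "- (a / x) + (1 - a) / (1 - x) = - ((a - x) / (x * (1 - x)))"
          using x0 by (simp add: field_simps)
        have "4 \<le> 1 / (x * (1 - x))" using quarter[of x] xx by (simp add: field_simps)
        then have "(a - x) * 4 \<le> (a - x) * (1 / (x * (1 - x)))"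
          using x by (intro mult_left_mono) auto
        then show ?thesis unfolding e by simp
      qed
      ultimately show "\<exists>y. (g has_real_derivative y) (at x) \<and> y \<le> 0" by blast
    qed
    moreover have "ln (a / b) = ln a - ln b" "ln ((1 - a) / (1 - b)) = ln (1 - a) - ln (1 - b)"
      using b a1' by (simp_all add: ln_div)
    ultimately show ?thesis by (simp add: g_def right_diff_distrib)
  qed
qed


section \<open>Divergences of finitely supported functions\<close>

definition kl_real :: "'u set \<Rightarrow> ('u \<Rightarrow> real) \<Rightarrow> ('u \<Rightarrow> real) \<Rightarrow> real" where
  "kl_real U r p = (\<Sum>u\<in>U. r u * ln (r u / p u))"

definition chi2_real :: "'u set \<Rightarrow> ('u \<Rightarrow> real) \<Rightarrow> ('u \<Rightarrow> real) \<Rightarrow> real" where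
  "chi2_real U r p = (\<Sum>u\<in>U. (r u - p u)^2 / p u)"

definition pos_pmf :: "'u set \<Rightarrow> ('u \<Rightarrow> real) \<Rightarrow> bool" where
  "pos_pmf U p \<longleftrightarrow> (\<forall>u\<in>U. p u > 0) \<and> sum p U = 1"

lemma kl_div_eq_kl_real: "\<forall>u\<in>U. p u > 0 \<Longrightarrow> kl_div U r p = ereal (kl_real U r p)"
  unfolding kl_div_def kl_real_def by (auto intro!: sum.cong)

lemma chi2_div_eq_chi2_real: "\<forall>u\<in>U. p u > 0 \<Longrightarrow> chi2_div U r p = ereal (chi2_real U r p)"
  unfolding chi2_div_def chi2_real_def by (auto intro!: sum.cong)

lemma chi2_real_nonneg: "\<forall>u\<in>U. p u > 0 \<Longrightarrow> 0 \<le> chi2_real U r p"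
  unfolding chi2_real_def by (intro sum_nonneg) auto

lemma chi2_real_eq_0_imp_eq:
  assumes "finite U" "\<forall>u\<in>U. p u > 0" "chi2_real U r p = 0" "u \<in> U"
  shows "r u = p u"
proof -
  have "\<forall>x\<in>U. 0 \<le> (r x - p x)^2 / p x" using assms(2) by auto
  then have "(r u - p u)^2 / p u = 0"
    using assms(1,3,4) sum_nonneg_eq_0_iff[of U "\<lambda>u. (r u - p u)^2 / p u"]
    unfolding chi2_real_def by auto
  then show ?thesis using assms by auto
qed

lemma kl_real_le_chi2_real:
  assumes "is_pmf U r" "pos_pmf U p"
  shows "kl_real U r p \<le> chi2_real U r p"
proof -
  have "kl_real U r p \<le> (\<Sum>u\<in>U. r u * (r u / p u - 1))"
    unfolding kl_real_def
  proof (rule sum_mono)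
    fix u assume u: "u \<in> U"
    then have p: "p u > 0" and r: "r u \<ge> 0" using assms by (auto simp: is_pmf_def pos_pmf_def)
    show "r u * ln (r u / p u) \<le> r u * (r u / p u - 1)"
    proof (cases "r u = 0")
      case False
      then have "ln (r u / p u) \<le> r u / p u - 1" using p r by (intro ln_le_minus_one) simp
      then show ?thesis using r by (intro mult_left_mono) auto
    qed simp
  qed
  also have "\<dots> = (\<Sum>u\<in>U. (r u - p u)^2 / p u + (r u - p u))"
  proof (rule sum.cong[OF refl])
    fix u assume "u \<in> U"
    then have "p u > 0" using assms(2) by (auto simp: pos_pmf_def)
    then show "r u * (r u / p u - 1) = (r u - p u)^2 / p u + (r u - p u)"
      by (simp add: field_simps power2_eq_square)
  qed
  also have "\<dots> = chi2_real U r p + (\<Sum>u\<in>U. r u - p u)"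
    unfolding chi2_real_def by (rule sum.distrib)
  also have "(\<Sum>u\<in>U. r u - p u) = 0"
    using assms by (simp add: sum_subtractf is_pmf_def pos_pmf_def)
  finally show ?thesis by simp
qed

lemma sum_squares_le_square_sum:
  fixes x :: "'i \<Rightarrow> real"
  assumes "finite I" "\<And>i. i \<in> I \<Longrightarrow> 0 \<le> x i"
  shows "(\<Sum>i\<in>I. (x i)^2) \<le> (\<Sum>i\<in>I. x i)^2"
proof -
  have "(\<Sum>i\<in>I. (x i)^2) \<le> (\<Sum>i\<in>I. x i * (\<Sum>j\<in>I. x j))"
  proof (rule sum_mono)
    fix i assume i: "i \<in> I"
    have "x i \<le> (\<Sum>j\<in>I. x j)" using assms i by (intro member_le_sum) auto
    then show "(x i)^2 \<le> x i * (\<Sum>j\<in>I. x j)" using assms i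
      by (simp add: power2_eq_square mult_left_mono)
  qed
  also have "\<dots> = (\<Sum>i\<in>I. x i)^2" by (simp add: sum_distrib_right power2_eq_square)
  finally show ?thesis .
qed

text \<open>Pinsker's inequality, in the weak form with the squared Euclidean distance: split U into the
  set S where r dominates p and its complement, bound each part by the squared total variation
  2 (a - b)^2 with a = r(S), b = p(S), and reduce to the binary case by the log-sum inequality.\<close>

lemma sum_square_diff_le_kl_real:
  assumes fin: "finite U" and r: "is_pmf U r" and p: "pos_pmf U p"
  shows "(\<Sum>u\<in>U. (r u - p u)^2) \<le> kl_real U r p"
proof -
  have r0: "\<And>u. u \<in> U \<Longrightarrow> 0 \<le> r u" and rs: "sum r U = 1" using r by (auto simp: is_pmf_def)
  have p0: "\<And>u. u \<in> U \<Longrightarrow> 0 < p u" and ps: "sum p U = 1" using p by (auto simp: pos_pmf_def)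
  define S where "S = {u\<in>U. p u \<le> r u}"
  define T where "T = U - S"
  have ST: "finite S" "finite T" "S \<inter> T = {}" "S \<union> T = U" using fin by (auto simp: S_def T_def)
  have split: "sum f U = sum f S + sum f T" for f :: "_ \<Rightarrow> real"
    using sum.union_disjoint[OF ST(1-3)] ST(4) by simp
  define a where "a = sum r S"
  define b where "b = sum p S"
  have ra: "sum r T = 1 - a" using rs split[of r] unfolding a_def by simp
  have pb: "sum p T = 1 - b" using ps split[of p] unfolding b_def by simp
  have ab: "b \<le> a" unfolding a_def b_def by (rule sum_mono) (auto simp: S_def)
  have "S \<noteq> {}"
  proof
    assume "S = {}"
    then have "\<forall>u\<in>U. r u < p u" by (auto simp: S_def)
    moreover have "U \<noteq> {}" using ps by auto
    ultimately have "sum r U < sum p U" using fin by (intro sum_strict_mono) auto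
    then show False using rs ps by simp
  qed
  then obtain s where s: "s \<in> S" by blast
  have "p s \<le> b" unfolding b_def using ST s p0 by (intro member_le_sum) (auto simp: S_def less_imp_le)
  then have b0: "0 < b" using p0[of s] s by (auto simp: S_def)
  have "0 \<le> sum r T" using r0 by (intro sum_nonneg) (auto simp: T_def)
  then have a1: "a \<le> 1" using ra by simp
  have "(\<Sum>u\<in>U. (r u - p u)^2) = (\<Sum>u\<in>S. (r u - p u)^2) + (\<Sum>u\<in>T. (p u - r u)^2)"
    using split[of "\<lambda>u. (r u - p u)^2"] by (simp add: power2_commute)
  also have "\<dots> \<le> (\<Sum>u\<in>S. r u - p u)^2 + (\<Sum>u\<in>T. p u - r u)^2"
    using ST by (intro add_mono sum_squares_le_square_sum) (auto simp: S_def T_def)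
  also have "\<dots> = 2 * (a - b)^2"
  proof -
    have "(\<Sum>u\<in>S. r u - p u) = a - b" by (simp add: sum_subtractf a_def b_def)
    moreover have "(\<Sum>u\<in>T. p u - r u) = a - b" using ra pb by (simp add: sum_subtractf)
    ultimately show ?thesis by simp
  qed
  also have "\<dots> \<le> a * ln (a / b) + (1 - a) * ln ((1 - a) / (1 - b))"
    using binary_pinsker b0 ab a1 by blast
  also have "\<dots> \<le> (\<Sum>u\<in>S. r u * ln (r u / p u)) + (\<Sum>u\<in>T. r u * ln (r u / p u))"
  proof (rule add_mono)
    show "a * ln (a / b) \<le> (\<Sum>u\<in>S. r u * ln (r u / p u))"
      unfolding a_def b_def using ST r0 p0 by (intro log_sum_inequality) (auto simp: S_def less_imp_le)
    show "(1 - a) * ln ((1 - a) / (1 - b)) \<le> (\<Sum>u\<in>T. r u * ln (r u / p u))"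
      unfolding ra[symmetric] pb[symmetric] using ST r0 p0
      by (intro log_sum_inequality) (auto simp: T_def less_imp_le)
  qed
  also have "\<dots> = kl_real U r p" unfolding kl_real_def by (rule split[symmetric])
  finally show ?thesis .
qed

lemma chi2_real_le_kl_real_div_min:
  assumes "finite U" "is_pmf U r" "pos_pmf U p" "m > 0" "\<And>u. u \<in> U \<Longrightarrow> m \<le> p u"
  shows "chi2_real U r p \<le> kl_real U r p / m"
proof -
  have "chi2_real U r p \<le> (\<Sum>u\<in>U. (r u - p u)^2 / m)"
    unfolding chi2_real_def using assms by (intro sum_mono divide_left_mono) (auto simp: pos_pmf_def)
  also have "\<dots> \<le> kl_real U r p / m"
    using sum_square_diff_le_kl_real[OF assms(1-3)] assms(4)
    by (simp add: sum_divide_distrib[symmetric] divide_right_mono)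
  finally show ?thesis .
qed


section \<open>Unnormalised relative entropy and its strong data processing inequality\<close>

definition stochastic :: "'u set \<Rightarrow> 'v set \<Rightarrow> ('u \<Rightarrow> 'v \<Rightarrow> real) \<Rightarrow> bool" where
  "stochastic U V W \<longleftrightarrow> (\<forall>u\<in>U. \<forall>v\<in>V. 0 \<le> W u v) \<and> (\<forall>u\<in>U. (\<Sum>v\<in>V. W u v) = 1)"

text \<open>For a nonnegative r of total mass M, kl_mass U r p is M times the KL divergence of r / M
  from p. Unlike KL itself it is positively homogeneous in r, so an inequality between such terms
  may be applied to the unnormalised slices of a joint distribution.\<close>

definition kl_mass :: "'u set \<Rightarrow> ('u \<Rightarrow> real) \<Rightarrow> ('u \<Rightarrow> real) \<Rightarrow> real" where
  "kl_mass U r p = (\<Sum>u\<in>U. r u * ln (r u / (sum r U * p u)))"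

definition kl_sdpi :: "'u set \<Rightarrow> 'v set \<Rightarrow> ('u \<Rightarrow> real) \<Rightarrow> ('u \<Rightarrow> 'v \<Rightarrow> real) \<Rightarrow> real \<Rightarrow> bool" where
  "kl_sdpi U V P W c \<longleftrightarrow> (\<forall>r. (\<forall>u\<in>U. 0 \<le> r u) \<longrightarrow>
      kl_mass V (channel_out U W r) (channel_out U W P) \<le> c * kl_mass U r P)"

lemma channel_out_mass:
  assumes "finite U" "finite V" "stochastic U V W"
  shows "sum (channel_out U W r) V = sum r U"
proof -
  have "sum (channel_out U W r) V = (\<Sum>u\<in>U. r u * (\<Sum>v\<in>V. W u v))"
    unfolding channel_out_def by (subst sum.swap) (simp add: sum_distrib_left mult.commute)
  also have "\<dots> = sum r U" using assms by (simp add: stochastic_def)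
  finally show ?thesis .
qed

lemma channel_out_nonneg:
  assumes "stochastic U V W" "\<forall>u\<in>U. 0 \<le> r u" "v \<in> V"
  shows "0 \<le> channel_out U W r v"
  unfolding channel_out_def using assms by (intro sum_nonneg) (auto simp: stochastic_def)

lemma mult_ln_divide_split:
  fixes x y z w :: real
  assumes "0 \<le> x" "x > 0 \<Longrightarrow> y > 0 \<and> z > 0 \<and> z / y = w"
  shows "x * ln (x / y) = x * ln (x / z) + x * ln w"
proof (cases "x = 0")
  case False
  then have x: "x > 0" and y: "y > 0" and z: "z > 0" and w: "z / y = w" using assms by auto
  have "ln (x / y) = ln (x / z) + ln (z / y)" using x y z by (simp add: ln_div)
  then show ?thesis using w by (simp add: distrib_left)
qed simp

lemma kl_mass_eq: "sum r U = M \<Longrightarrow> kl_mass U r p = (\<Sum>u\<in>U. r u * ln (r u / (M * p u)))"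
  unfolding kl_mass_def by simp

lemma kl_mass_eq_kl_real: "sum r U = 1 \<Longrightarrow> kl_mass U r p = kl_real U r p"
  unfolding kl_mass_def kl_real_def by simp

lemma kl_mass_singleton: "p u = 1 \<Longrightarrow> kl_mass {u} f p = 0"
  unfolding kl_mass_def by (cases "f u = 0") simp_all

lemma kl_mass_reindex:
  assumes "bij_betw h U' U"
  shows "kl_mass U f p = kl_mass U' (\<lambda>u. f (h u)) (\<lambda>u. p (h u))"
proof -
  have "sum f U = sum (\<lambda>u. f (h u)) U'" using sum.reindex_bij_betw[OF assms, of f] by simp
  then show ?thesis unfolding kl_mass_def
    using sum.reindex_bij_betw[OF assms, of "\<lambda>u. f u * ln (f u / (sum f U * p u))"] by simp
qed

lemma kl_mass_channel_le:
  assumes fin: "finite U" "finite V" and W: "stochastic U V W" and P: "\<forall>u\<in>U. P u > 0"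
    and r: "\<forall>u\<in>U. 0 \<le> r u"
  shows "kl_mass V (channel_out U W r) (channel_out U W P) \<le> kl_mass U r P"
proof -
  define M where "M = sum r U"
  have W0: "\<And>u v. u \<in> U \<Longrightarrow> v \<in> V \<Longrightarrow> 0 \<le> W u v" using W by (auto simp: stochastic_def)
  have rM: "\<And>u. u \<in> U \<Longrightarrow> r u \<le> M" unfolding M_def using fin r by (intro member_le_sum) auto
  have "kl_mass V (channel_out U W r) (channel_out U W P)
      = (\<Sum>v\<in>V. (\<Sum>u\<in>U. W u v * r u) * ln ((\<Sum>u\<in>U. W u v * r u) / (\<Sum>u\<in>U. M * (W u v * P u))))"
    using kl_mass_eq[OF channel_out_mass[OF fin W]]
    by (simp add: M_def channel_out_def sum_distrib_left)
  also have "\<dots> \<le> (\<Sum>v\<in>V. \<Sum>u\<in>U. (W u v * r u) * ln ((W u v * r u) / (M * (W u v * P u))))"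
  proof (intro sum_mono log_sum_inequality[OF fin(1)])
    fix v u assume v: "v \<in> V" and u: "u \<in> U"
    show "0 \<le> W u v * r u" using W0[OF u v] r u by simp
    have "0 \<le> M" using rM[OF u] r u by (meson order_trans)
    then show "0 \<le> M * (W u v * P u)" using W0[OF u v] P u by (simp add: less_imp_le)
    assume "0 < W u v * r u"
    then have "W u v > 0" "r u > 0" using W0[OF u v] r u by (auto simp: zero_less_mult_iff)
    then show "0 < M * (W u v * P u)" using rM[OF u] P u by simp
  qed
  also have "\<dots> = (\<Sum>v\<in>V. \<Sum>u\<in>U. W u v * (r u * ln (r u / (M * P u))))"
    by (intro sum.cong refl) (auto simp: mult.assoc)
  also have "\<dots> = (\<Sum>u\<in>U. (r u * ln (r u / (M * P u))) * (\<Sum>v\<in>V. W u v))"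
    by (subst sum.swap) (simp add: sum_distrib_right mult.commute)
  also have "\<dots> = kl_mass U r P"
    using W by (simp add: stochastic_def kl_mass_def M_def)
  finally show ?thesis .
qed

lemma kl_mass_chain_rule:
  fixes f :: "'y \<times> 'z \<Rightarrow> real"
  assumes fin: "finite Y" "finite Z" and f0: "\<forall>u\<in>Y \<times> Z. 0 \<le> f u"
    and q1: "\<forall>y\<in>Y. 0 < q1 y" and q2: "\<forall>z\<in>Z. 0 < q2 z"
  shows "kl_mass (Y \<times> Z) f (\<lambda>(y, z). q1 y * q2 z)
    = kl_mass Y (\<lambda>y. \<Sum>z\<in>Z. f (y, z)) q1 + (\<Sum>y\<in>Y. kl_mass Z (\<lambda>z. f (y, z)) q2)"
proof -
  define F where "F y = (\<Sum>z\<in>Z. f (y, z))" for y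
  define M where "M = sum F Y"
  have M: "sum f (Y \<times> Z) = M" unfolding M_def F_def sum.cartesian_product' ..
  have F0: "0 \<le> F y" if "y \<in> Y" for y unfolding F_def using f0 that by (intro sum_nonneg) auto
  have fF: "f (y, z) \<le> F y" if "y \<in> Y" "z \<in> Z" for y z
    unfolding F_def using f0 fin that by (intro member_le_sum[where f = "\<lambda>z. f (y, z)"]) auto
  have FM: "F y \<le> M" if "y \<in> Y" for y unfolding M_def using F0 fin that by (intro member_le_sum) auto
  have "kl_mass (Y \<times> Z) f (\<lambda>(y, z). q1 y * q2 z)
      = (\<Sum>y\<in>Y. \<Sum>z\<in>Z. f (y, z) * ln (f (y, z) / (M * (q1 y * q2 z))))"
    unfolding kl_mass_eq[OF M] sum.cartesian_product' by simp
  also have "\<dots> = (\<Sum>y\<in>Y. \<Sum>z\<in>Z. f (y, z) * ln (f (y, z) / (F y * q2 z)) + f (y, z) * ln (F y / (M * q1 y)))"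
  proof (intro sum.cong refl mult_ln_divide_split)
    fix y z assume y: "y \<in> Y" and z: "z \<in> Z"
    show "0 \<le> f (y, z)" using f0 y z by simp
    assume "0 < f (y, z)"
    then have "0 < F y" "0 < M" using fF[OF y z] FM[OF y] by auto
    then show "0 < M * (q1 y * q2 z) \<and> 0 < F y * q2 z \<and> F y * q2 z / (M * (q1 y * q2 z)) = F y / (M * q1 y)"
      using q1 q2 y z by (simp add: less_imp_neq[symmetric])
  qed
  also have "\<dots> = (\<Sum>y\<in>Y. kl_mass Z (\<lambda>z. f (y, z)) q2) + (\<Sum>y\<in>Y. F y * ln (F y / (M * q1 y)))"
    by (simp add: sum.distrib sum_distrib_right[symmetric] kl_mass_eq F_def)
  also have "(\<Sum>y\<in>Y. F y * ln (F y / (M * q1 y))) = kl_mass Y F q1"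
    by (simp add: kl_mass_eq M_def)
  finally show ?thesis unfolding F_def by simp
qed

lemma kl_mass_chain_rule':
  fixes f :: "'y \<times> 'z \<Rightarrow> real"
  assumes "finite Y" "finite Z" "\<forall>u\<in>Y \<times> Z. 0 \<le> f u" "\<forall>y\<in>Y. 0 < q1 y" "\<forall>z\<in>Z. 0 < q2 z"
  shows "kl_mass (Y \<times> Z) f (\<lambda>(y, z). q1 y * q2 z)
    = kl_mass Z (\<lambda>z. \<Sum>y\<in>Y. f (y, z)) q2 + (\<Sum>z\<in>Z. kl_mass Y (\<lambda>y. f (y, z)) q1)"
proof -
  have "bij_betw prod.swap (Z \<times> Y) (Y \<times> Z)"
    by (simp add: bij_betw_def product_swap)
  from kl_mass_reindex[OF this] 
  have "kl_mass (Y \<times> Z) f (\<lambda>(y, z). q1 y * q2 z)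
      = kl_mass (Z \<times> Y) (\<lambda>(z, y). f (y, z)) (\<lambda>(z, y). q2 z * q1 y)"
    by (simp add: case_prod_unfold prod.swap_def mult.commute)
  also have "\<dots> = kl_mass Z (\<lambda>z. \<Sum>y\<in>Y. f (y, z)) q2 + (\<Sum>z\<in>Z. kl_mass Y (\<lambda>y. f (y, z)) q1)"
    using assms by (subst kl_mass_chain_rule) auto
  finally show ?thesis .
qed

lemma kl_mass_sum_le:
  fixes f :: "'i \<Rightarrow> 'u \<Rightarrow> real"
  assumes fin: "finite I" "finite U" and f0: "\<forall>i\<in>I. \<forall>u\<in>U. 0 \<le> f i u" and p: "\<forall>u\<in>U. 0 < p u"
  shows "kl_mass U (\<lambda>u. \<Sum>i\<in>I. f i u) p \<le> (\<Sum>i\<in>I. kl_mass U (f i) p)"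
proof -
  define m where "m i = sum (f i) U" for i
  have fm: "f i u \<le> m i" if "i \<in> I" "u \<in> U" for i u
    unfolding m_def using f0 fin that by (intro member_le_sum) auto
  have "kl_mass U (\<lambda>u. \<Sum>i\<in>I. f i u) p
      = (\<Sum>u\<in>U. (\<Sum>i\<in>I. f i u) * ln ((\<Sum>i\<in>I. f i u) / (\<Sum>i\<in>I. m i * p u)))"
    unfolding kl_mass_def m_def by (simp add: sum.swap[of _ U I] sum_distrib_right)
  also have "\<dots> \<le> (\<Sum>u\<in>U. \<Sum>i\<in>I. f i u * ln (f i u / (m i * p u)))"
  proof (intro sum_mono log_sum_inequality[OF fin(1)])
    fix u i assume u: "u \<in> U" and i: "i \<in> I"
    show "0 \<le> f i u" using f0 i u by simp
    have "0 \<le> m i" using fm[OF i u] f0 i u by (meson order_trans)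
    then show "0 \<le> m i * p u" using p u by (simp add: less_imp_le)
    assume "0 < f i u"
    then show "0 < m i * p u" using fm[OF i u] p u by simp
  qed
  also have "\<dots> = (\<Sum>i\<in>I. kl_mass U (f i) p)"
    by (subst sum.swap) (simp add: kl_mass_def m_def)
  finally show ?thesis .
qed


lemma kl_sdpi_of_pmf_bound:
  assumes fin: "finite U" "finite V" and W: "stochastic U V W"
    and H: "\<And>r. is_pmf U r \<Longrightarrow> kl_real V (channel_out U W r) (channel_out U W P) \<le> c * kl_real U r P"
  shows "kl_sdpi U V P W c"
  unfolding kl_sdpi_def
proof (intro allI impI)
  fix r :: "_ \<Rightarrow> real" assume r: "\<forall>u\<in>U. 0 \<le> r u"
  define M where "M = sum r U"
  have "M \<ge> 0" unfolding M_def using r by (intro sum_nonneg) auto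
  have Ms: "sum (channel_out U W r) V = M" unfolding M_def by (rule channel_out_mass[OF fin W])
  show "kl_mass V (channel_out U W r) (channel_out U W P) \<le> c * kl_mass U r P"
  proof (cases "M = 0")
    case True
    then have "\<forall>u\<in>U. r u = 0" using sum_nonneg_eq_0_iff[OF fin(1)] r unfolding M_def by blast
    then show ?thesis by (simp add: kl_mass_def channel_out_def)
  next
    case False
    with \<open>M \<ge> 0\<close> have M_pos: "M > 0" "M \<noteq> 0" by simp_all
    \<comment> \<open>Both sides are homogeneous of degree one in r; normalise.\<close>
    define r' where "r' u = r u / M" for u
    have pmf: "is_pmf U r'" unfolding is_pmf_def r'_def using r M_pos
      by (auto simp: sum_divide_distrib[symmetric] M_def[symmetric])
    have rr: "r u = M * r' u" for u unfolding r'_def using M_pos by simp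
    have co: "channel_out U W r v = M * channel_out U W r' v" for v
      unfolding channel_out_def rr by (simp add: sum_distrib_left algebra_simps)
    have "kl_mass U r P = (\<Sum>u\<in>U. M * (r' u * ln (r' u / P u)))"
      unfolding kl_mass_eq[OF M_def[symmetric]] by (intro sum.cong refl) (simp add: rr M_pos)
    then have "kl_mass U r P = M * kl_real U r' P"
      by (simp add: kl_real_def sum_distrib_left)
    moreover have "kl_mass V (channel_out U W r) (channel_out U W P)
        = M * kl_real V (channel_out U W r') (channel_out U W P)"
      unfolding kl_mass_eq[OF Ms] kl_real_def by (simp add: sum_distrib_left co M_pos mult.assoc)
    ultimately show ?thesis using H[OF pmf] M_pos by simp
  qed
qed

lemma kl_sdpi_reindex:
  assumes h: "bij_betw h U' U" and k: "bij_betw k V' V"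
    and S: "kl_sdpi U' V' (\<lambda>u. P (h u)) (\<lambda>u v. W (h u) (k v)) c"
  shows "kl_sdpi U V P W c"
  unfolding kl_sdpi_def
proof (intro allI impI)
  fix r :: "_ \<Rightarrow> real" assume r: "\<forall>u\<in>U. 0 \<le> r u"
  have co: "channel_out U W f (k v) = channel_out U' (\<lambda>u v. W (h u) (k v)) (\<lambda>u. f (h u)) v" for f v
    unfolding channel_out_def using sum.reindex_bij_betw[OF h, of "\<lambda>u. W u (k v) * f u"] by simp
  have "kl_mass V (channel_out U W r) (channel_out U W P)
      = kl_mass V' (channel_out U' (\<lambda>u v. W (h u) (k v)) (\<lambda>u. r (h u)))
                   (channel_out U' (\<lambda>u v. W (h u) (k v)) (\<lambda>u. P (h u)))"
    unfolding kl_mass_reindex[OF k] co ..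
  also have "\<dots> \<le> c * kl_mass U' (\<lambda>u. r (h u)) (\<lambda>u. P (h u))"
    using S r h unfolding kl_sdpi_def bij_betw_def by auto
  also have "\<dots> = c * kl_mass U r P" using kl_mass_reindex[OF h, of r P] by simp
  finally show "kl_mass V (channel_out U W r) (channel_out U W P) \<le> c * kl_mass U r P" .
qed

lemma channel_out_product:
  "channel_out (A \<times> B) (\<lambda>(a, b) (y, z). W1 a y * W2 b z) r
    = (\<lambda>(y, z). channel_out B W2 (\<lambda>b. channel_out A W1 (\<lambda>a. r (a, b)) y) z)"
proof (rule ext, clarify)
  fix y z show "channel_out (A \<times> B) (\<lambda>(a, b) (y, z). W1 a y * W2 b z) r (y, z)
      = channel_out B W2 (\<lambda>b. channel_out A W1 (\<lambda>a. r (a, b)) y) z"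
    unfolding channel_out_def sum.cartesian_product'
    by (subst sum.swap) (simp add: sum_distrib_left algebra_simps)
qed

lemma channel_out_product_input:
  "channel_out (A \<times> B) (\<lambda>(a, b) (y, z). W1 a y * W2 b z) (\<lambda>(a, b). P1 a * P2 b)
    = (\<lambda>(y, z). channel_out A W1 P1 y * channel_out B W2 P2 z)"
proof (rule ext, clarify)
  fix y z show "channel_out (A \<times> B) (\<lambda>(a, b) (y, z). W1 a y * W2 b z) (\<lambda>(a, b). P1 a * P2 b) (y, z)
      = channel_out A W1 P1 y * channel_out B W2 P2 z"
    unfolding channel_out_def sum.cartesian_product' by (simp add: sum_product algebra_simps)
qed

lemma kl_mass_slicewise_channel_le:
  fixes T :: "'y \<times> 'b \<Rightarrow> real"
  assumes fin: "finite Y" "finite B" "finite Z" and W: "stochastic B Z W" and S: "kl_sdpi B Z P W c"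
    and T0: "\<forall>u\<in>Y \<times> B. 0 \<le> T u" and q: "\<forall>y\<in>Y. 0 < q y" and Q: "\<forall>z\<in>Z. 0 < channel_out B W P z"
  shows "kl_mass (Y \<times> Z) (\<lambda>(y, z). channel_out B W (\<lambda>b. T (y, b)) z) (\<lambda>(y, z). q y * channel_out B W P z)
    \<le> kl_mass Y (\<lambda>y. \<Sum>b\<in>B. T (y, b)) q + c * (\<Sum>y\<in>Y. kl_mass B (\<lambda>b. T (y, b)) P)"
proof -
  have out0: "\<forall>u\<in>Y \<times> Z. 0 \<le> (\<lambda>(y, z). channel_out B W (\<lambda>b. T (y, b)) z) u"
    using T0 by (auto intro!: channel_out_nonneg[OF W])
  have marg: "(\<Sum>z\<in>Z. channel_out B W (\<lambda>b. T (y, b)) z) = (\<Sum>b\<in>B. T (y, b))" for y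
    by (rule channel_out_mass[OF fin(2,3) W])
  have "kl_mass (Y \<times> Z) (\<lambda>(y, z). channel_out B W (\<lambda>b. T (y, b)) z) (\<lambda>(y, z). q y * channel_out B W P z)
      = kl_mass Y (\<lambda>y. \<Sum>b\<in>B. T (y, b)) q + (\<Sum>y\<in>Y. kl_mass Z (channel_out B W (\<lambda>b. T (y, b))) (channel_out B W P))"
    using kl_mass_chain_rule[OF fin(1,3) out0 q Q] by (simp add: marg)
  also have "\<dots> \<le> kl_mass Y (\<lambda>y. \<Sum>b\<in>B. T (y, b)) q + c * (\<Sum>y\<in>Y. kl_mass B (\<lambda>b. T (y, b)) P)"
    using S T0 unfolding kl_sdpi_def sum_distrib_left by (intro add_left_mono sum_mono) auto
  finally show ?thesis .
qed

text \<open>Let T(y, b) be the result of passing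
  each slice r(-, b) of the input through W1. The inequality for W2, applied slice-wise, bounds the
  output divergence by the divergences of T; the chain rule for T along y and along b turns this into
  a bound with W1 applied slice-wise, up to a surplus term that is absorbed by subadditivity of kl_mass.
  This is where c \<le> 1 enters.\<close>

lemma kl_sdpi_product:
  fixes W1 :: "'a \<Rightarrow> 'y \<Rightarrow> real" and W2 :: "'b \<Rightarrow> 'z \<Rightarrow> real"
  assumes fin: "finite A" "finite B" "finite Y" "finite Z"
    and W1: "stochastic A Y W1" and W2: "stochastic B Z W2"
    and P1: "\<forall>a\<in>A. P1 a > 0" and P2: "\<forall>b\<in>B. P2 b > 0"
    and Q1_pos: "\<forall>y\<in>Y. channel_out A W1 P1 y > 0" and Q2_pos: "\<forall>z\<in>Z. channel_out B W2 P2 z > 0"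
    and S1: "kl_sdpi A Y P1 W1 c" and S2: "kl_sdpi B Z P2 W2 c" and c1: "c \<le> 1"
  shows "kl_sdpi (A \<times> B) (Y \<times> Z) (\<lambda>(a, b). P1 a * P2 b) (\<lambda>(a, b) (y, z). W1 a y * W2 b z) c"
  unfolding kl_sdpi_def
proof (intro allI impI)
  let ?W = "\<lambda>(a, b) (y, z). W1 a y * W2 b z" and ?P = "\<lambda>(a, b). P1 a * P2 b"
  fix r :: "'a \<times> 'b \<Rightarrow> real"
  assume r: "\<forall>u\<in>A \<times> B. 0 \<le> r u"
  define Q1 where "Q1 = channel_out A W1 P1"
  define T where "T = (\<lambda>(y, b). channel_out A W1 (\<lambda>a. r (a, b)) y)"
  define RB where "RB b = (\<Sum>a\<in>A. r (a, b))" for b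
  have T0: "\<forall>u\<in>Y \<times> B. 0 \<le> T u"
    unfolding T_def using r by (auto intro!: channel_out_nonneg[OF W1])
  have T_marg: "(\<Sum>y\<in>Y. T (y, b)) = RB b" for b
    unfolding T_def RB_def using channel_out_mass[OF fin(1,3) W1] by simp
  have Q1: "\<forall>y\<in>Y. 0 < Q1 y" using Q1_pos by (simp add: Q1_def)
  have T_chain: "kl_mass Y (\<lambda>y. \<Sum>b\<in>B. T (y, b)) Q1 + (\<Sum>y\<in>Y. kl_mass B (\<lambda>b. T (y, b)) P2)
      = kl_mass B RB P2 + (\<Sum>b\<in>B. kl_mass Y (\<lambda>y. T (y, b)) Q1)"
    using kl_mass_chain_rule[OF fin(3,2) T0 Q1 P2] kl_mass_chain_rule'[OF fin(3,2) T0 Q1 P2]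
    by (simp add: T_marg)
  have subadd: "kl_mass B RB P2 \<le> (\<Sum>y\<in>Y. kl_mass B (\<lambda>b. T (y, b)) P2)"
    using kl_mass_sum_le[OF fin(3,2), of "\<lambda>y b. T (y, b)" P2] T0 P2 by (simp add: T_marg)
  have "kl_mass (Y \<times> Z) (channel_out (A \<times> B) ?W r) (channel_out (A \<times> B) ?W ?P)
      = kl_mass (Y \<times> Z) (\<lambda>(y, z). channel_out B W2 (\<lambda>b. T (y, b)) z) (\<lambda>(y, z). Q1 y * channel_out B W2 P2 z)"
    unfolding channel_out_product_input unfolding channel_out_product T_def Q1_def by simp
  also have "\<dots> \<le> kl_mass Y (\<lambda>y. \<Sum>b\<in>B. T (y, b)) Q1 + c * (\<Sum>y\<in>Y. kl_mass B (\<lambda>b. T (y, b)) P2)"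
    by (rule kl_mass_slicewise_channel_le[OF fin(3,2,4) W2 S2 T0 Q1 Q2_pos])
  also have "\<dots> \<le> (\<Sum>b\<in>B. kl_mass Y (\<lambda>y. T (y, b)) Q1) + c * kl_mass B RB P2"
  proof -
    have "0 \<le> (1 - c) * ((\<Sum>y\<in>Y. kl_mass B (\<lambda>b. T (y, b)) P2) - kl_mass B RB P2)"
      using c1 subadd by simp
    then show ?thesis using T_chain by (simp add: algebra_simps)
  qed
  also have "\<dots> \<le> c * (\<Sum>b\<in>B. kl_mass A (\<lambda>a. r (a, b)) P1) + c * kl_mass B RB P2"
    using S1 r unfolding kl_sdpi_def Q1_def T_def sum_distrib_left
    by (intro add_right_mono sum_mono) auto
  also have "\<dots> = c * kl_mass (A \<times> B) r ?P"
    using kl_mass_chain_rule'[OF fin(1,2) r P1 P2] by (simp add: RB_def[abs_def] distrib_left)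
  finally show "kl_mass (Y \<times> Z) (channel_out (A \<times> B) ?W r) (channel_out (A \<times> B) ?W ?P)
      \<le> c * kl_mass (A \<times> B) r ?P" .
qed

section \<open>Contraction coefficients\<close>

lemma kl_ratio_le_eta_KL:
  assumes P: "\<forall>u\<in>U. 0 < P u" and Q: "\<forall>v\<in>V. 0 < channel_out U W P v"
    and R: "is_pmf U R" and pos: "0 < kl_real U R P"
  shows "ereal (kl_real V (channel_out U W R) (channel_out U W P) / kl_real U R P) \<le> eta_KL U V P W"
  unfolding eta_KL_def
proof (rule Sup_upper, intro CollectI exI conjI)
  show "ereal (kl_real V (channel_out U W R) (channel_out U W P) / kl_real U R P)
      = kl_div V (channel_out U W R) (channel_out U W P) / kl_div U R P"
    using pos by (simp add: kl_div_eq_kl_real[OF P] kl_div_eq_kl_real[OF Q])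
qed (use R pos in \<open>simp_all add: kl_div_eq_kl_real[OF P]\<close>)

lemma eta_KL_le:
  assumes P: "\<forall>u\<in>U. 0 < P u" and Q: "\<forall>v\<in>V. 0 < channel_out U W P v"
    and H: "\<And>R. is_pmf U R \<Longrightarrow> 0 < kl_real U R P \<Longrightarrow>
      ereal (kl_real V (channel_out U W R) (channel_out U W P) / kl_real U R P) \<le> z"
  shows "eta_KL U V P W \<le> z"
  unfolding eta_KL_def
proof (rule Sup_least, clarify)
  fix R assume R: "is_pmf U R" and "0 < kl_div U R P"
  then have pos: "0 < kl_real U R P" by (simp add: kl_div_eq_kl_real[OF P])
  then show "kl_div V (channel_out U W R) (channel_out U W P) / kl_div U R P \<le> z"
    using H[OF R pos] by (simp add: kl_div_eq_kl_real[OF P] kl_div_eq_kl_real[OF Q])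
qed

lemma chi2_ratio_le_eta_chi2:
  assumes P: "\<forall>u\<in>U. 0 < P u" and Q: "\<forall>v\<in>V. 0 < channel_out U W P v"
    and R: "is_pmf U R" and pos: "0 < chi2_real U R P"
  shows "ereal (chi2_real V (channel_out U W R) (channel_out U W P) / chi2_real U R P) \<le> eta_chi2 U V P W"
  unfolding eta_chi2_def
proof (rule Sup_upper, intro CollectI exI conjI)
  show "ereal (chi2_real V (channel_out U W R) (channel_out U W P) / chi2_real U R P)
      = chi2_div V (channel_out U W R) (channel_out U W P) / chi2_div U R P"
    using pos by (simp add: chi2_div_eq_chi2_real[OF P] chi2_div_eq_chi2_real[OF Q])
qed (use R pos in \<open>simp_all add: chi2_div_eq_chi2_real[OF P]\<close>)

lemma eta_chi2_le:
  assumes P: "\<forall>u\<in>U. 0 < P u" and Q: "\<forall>v\<in>V. 0 < channel_out U W P v"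
    and H: "\<And>R. is_pmf U R \<Longrightarrow> 0 < chi2_real U R P \<Longrightarrow>
      ereal (chi2_real V (channel_out U W R) (channel_out U W P) / chi2_real U R P) \<le> z"
  shows "eta_chi2 U V P W \<le> z"
  unfolding eta_chi2_def
proof (rule Sup_least, clarify)
  fix R assume R: "is_pmf U R" and "0 < chi2_div U R P"
  then have pos: "0 < chi2_real U R P" by (simp add: chi2_div_eq_chi2_real[OF P])
  then show "chi2_div V (channel_out U W R) (channel_out U W P) / chi2_div U R P \<le> z"
    using H[OF R pos] by (simp add: chi2_div_eq_chi2_real[OF P] chi2_div_eq_chi2_real[OF Q])
qed


lemma xlnx_remainder_limit: "((\<lambda>u::real. ((1 + u) * ln (1 + u) - u) / u^2) \<longlongrightarrow> 1 / 2) (at 0)"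
  by real_asymp

lemma xlnx_remainder_scaled_limit:
  fixes a :: real
  shows "((\<lambda>t. ((1 + t * a) * ln (1 + t * a) - t * a) / t^2) \<longlongrightarrow> a^2 / 2) (at_right 0)"
proof (cases "a = 0")
  case False
  have "filterlim (\<lambda>t::real. t * a) (at 0) (at_right 0)"
  proof (rule filterlim_atI)
    have "((\<lambda>t::real. t * a) \<longlongrightarrow> 0 * a) (at_right 0)" by (intro tendsto_intros)
    then show "((\<lambda>t::real. t * a) \<longlongrightarrow> 0) (at_right 0)" by simp
    show "\<forall>\<^sub>F t in at_right 0. t * a \<noteq> 0"
      using False eventually_at_right_less[of 0] by (auto elim: eventually_mono)
  qed
  from filterlim_compose[OF xlnx_remainder_limit this]
  have "((\<lambda>t. a^2 * (((1 + t * a) * ln (1 + t * a) - t * a) / (t * a)^2)) \<longlongrightarrow> a^2 * (1 / 2)) (at_right 0)"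
    by (intro tendsto_mult tendsto_const) simp
  moreover have "\<forall>\<^sub>F t in at_right 0. a^2 * (((1 + t * a) * ln (1 + t * a) - t * a) / (t * a)^2)
      = ((1 + t * a) * ln (1 + t * a) - t * a) / t^2"
    using eventually_at_right_less[of 0] by eventually_elim (use False in \<open>simp add: power_mult_distrib\<close>)
  ultimately show ?thesis by (simp add: tendsto_cong)
qed simp

lemma kl_real_perturbation_limit:
  assumes fin: "finite V" and Q: "\<forall>v\<in>V. Q v > 0" and J: "sum J V = 0"
  shows "((\<lambda>t. kl_real V (\<lambda>v. Q v + t * J v) Q / t^2) \<longlongrightarrow> chi2_real V (\<lambda>v. Q v + J v) Q / 2) (at_right 0)"
proof -
  define \<phi> where "\<phi> u = (1 + u) * ln (1 + u) - u" for u :: real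
  have expand: "(Q v + t * J v) * ln ((Q v + t * J v) / Q v) = Q v * \<phi> (t * (J v / Q v)) + t * J v"
    if "v \<in> V" for v t
  proof -
    have "Q v > 0" using Q that by auto
    then have "(Q v + t * J v) / Q v = 1 + t * (J v / Q v)" "Q v + t * J v = Q v * (1 + t * (J v / Q v))"
      by (simp_all add: field_simps)
    then show ?thesis unfolding \<phi>_def by (simp add: algebra_simps)
  qed
  have eq: "kl_real V (\<lambda>v. Q v + t * J v) Q / t^2 = (\<Sum>v\<in>V. Q v * (\<phi> (t * (J v / Q v)) / t^2))" for t
    unfolding kl_real_def using J
    by (simp add: expand sum.distrib sum_distrib_left[symmetric] sum_divide_distrib)
  have lim: "((\<lambda>t. \<Sum>v\<in>V. Q v * (\<phi> (t * (J v / Q v)) / t^2)) \<longlongrightarrow> (\<Sum>v\<in>V. Q v * ((J v / Q v)^2 / 2))) (at_right 0)"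
    unfolding \<phi>_def by (intro tendsto_sum tendsto_mult tendsto_const xlnx_remainder_scaled_limit)
  have val: "(\<Sum>v\<in>V. Q v * ((J v / Q v)^2 / 2)) = chi2_real V (\<lambda>v. Q v + J v) Q / 2"
    unfolding chi2_real_def sum_divide_distrib using Q
    by (intro sum.cong refl) (simp add: power2_eq_square)
  show ?thesis unfolding eq val[symmetric] by (rule lim)
qed

lemma channel_out_add_scaled:
  "channel_out U W (\<lambda>u. f u + t * g u) v = channel_out U W f v + t * channel_out U W g v"
  unfolding channel_out_def by (simp add: sum.distrib sum_distrib_left algebra_simps)


lemma is_pmf_mixture:
  assumes R: "is_pmf U R" and P: "pos_pmf U P" and t: "0 \<le> t" "t \<le> 1"
  shows "is_pmf U (\<lambda>u. P u + t * (R u - P u))"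
proof -
  have "0 \<le> P u + t * (R u - P u)" if "u \<in> U" for u
  proof -
    have "0 \<le> (1 - t) * P u" "0 \<le> t * R u"
      using t R P that by (auto simp: is_pmf_def pos_pmf_def less_imp_le)
    then show ?thesis by (simp add: algebra_simps)
  qed
  moreover have "(\<Sum>u\<in>U. P u + t * (R u - P u)) = 1"
    using R P by (simp add: sum.distrib sum_distrib_left[symmetric] sum_subtractf is_pmf_def pos_pmf_def)
  ultimately show ?thesis by (simp add: is_pmf_def)
qed

lemma chi2_ratio_le_eta_KL:
  assumes fin: "finite U" "finite V" and W: "stochastic U V W" and P: "pos_pmf U P"
    and Q: "\<forall>v\<in>V. channel_out U W P v > 0"
    and R: "is_pmf U R" and pos: "chi2_real U R P > 0"
  shows "ereal (chi2_real V (channel_out U W R) (channel_out U W P) / chi2_real U R P) \<le> eta_KL U V P W"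
proof -
  define J where "J u = R u - P u" for u
  define JO where "JO = channel_out U W J"
  define Rt where "Rt t u = P u + t * J u" for t u
  have P0: "\<forall>u\<in>U. P u > 0" using P by (simp add: pos_pmf_def)
  have sumJ: "sum J U = 0" using P R by (simp add: J_def sum_subtractf pos_pmf_def is_pmf_def)
  have sumJO: "sum JO V = 0" unfolding JO_def using channel_out_mass[OF fin W] sumJ by simp
  have out_Rt: "channel_out U W (Rt t) = (\<lambda>v. channel_out U W P v + t * JO v)" for t
    unfolding Rt_def JO_def by (rule ext) (rule channel_out_add_scaled)
  have R_eq: "R = (\<lambda>u. P u + J u)" and Rt1: "Rt 1 = R" by (auto simp: J_def Rt_def)
  have out_R: "channel_out U W R = (\<lambda>v. channel_out U W P v + JO v)"
    using out_Rt[of 1] by (simp add: Rt1)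
  define fi where "fi t = kl_real U (Rt t) P" for t
  define fo where "fo t = kl_real V (channel_out U W (Rt t)) (channel_out U W P)" for t
  have "((\<lambda>t. fi t / t^2) \<longlongrightarrow> chi2_real U R P / 2) (at_right 0)"
    unfolding fi_def Rt_def R_eq by (rule kl_real_perturbation_limit[OF fin(1) P0 sumJ])
  moreover have "((\<lambda>t. fo t / t^2) \<longlongrightarrow> chi2_real V (channel_out U W R) (channel_out U W P) / 2) (at_right 0)"
    unfolding fo_def out_Rt out_R by (rule kl_real_perturbation_limit[OF fin(2) Q sumJO])
  ultimately have lim: "((\<lambda>t. ereal ((fo t / t^2) / (fi t / t^2)))
      \<longlongrightarrow> ereal (chi2_real V (channel_out U W R) (channel_out U W P) / chi2_real U R P)) (at_right 0)"
    using pos by (auto intro!: tendsto_ereal dest: tendsto_divide)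
  have "\<forall>\<^sub>F t in at_right 0. 0 < fi t / t^2"
    using order_tendstoD(1)[OF \<open>((\<lambda>t. fi t / t^2) \<longlongrightarrow> _) _\<close>] pos by simp
  moreover have "\<forall>\<^sub>F t in at_right (0::real). t < 1"
    unfolding eventually_at_right_field by (intro exI[of _ 1]) auto
  ultimately have "\<forall>\<^sub>F t in at_right 0. ereal ((fo t / t^2) / (fi t / t^2)) \<le> eta_KL U V P W"
    using eventually_at_right_less[of 0]
  proof eventually_elim
    case (elim t)
    then have "0 < fi t" by (simp add: zero_less_divide_iff)
    moreover have "is_pmf U (Rt t)" unfolding Rt_def J_def using elim by (intro is_pmf_mixture[OF R P]) auto
    ultimately show ?case using kl_ratio_le_eta_KL[OF P0 Q] elim by (simp add: fi_def fo_def)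
  qed
  then show ?thesis by (intro tendsto_upperbound[OF lim]) simp_all
qed

lemma eta_chi2_le_eta_KL:
  assumes "finite U" "finite V" "stochastic U V W" "pos_pmf U P" "\<forall>v\<in>V. channel_out U W P v > 0"
  shows "eta_chi2 U V P W \<le> eta_KL U V P W"
  using assms by (intro eta_chi2_le chi2_ratio_le_eta_KL) (auto simp: pos_pmf_def)


lemma eta_chi2_nonneg:
  assumes fin: "finite U" and u: "u0 \<in> U" "u1 \<in> U" "u0 \<noteq> u1"
    and P: "\<forall>u\<in>U. 0 < P u" and Q: "\<forall>v\<in>V. 0 < channel_out U W P v"
  shows "0 \<le> eta_chi2 U V P W"
proof -
  define r where "r u = (if u = u0 then 1 else 0 :: real)" for u
  have r: "is_pmf U r" using fin u by (simp add: is_pmf_def r_def)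
  have "0 < (r u1 - P u1)^2 / P u1" using u P by (simp add: r_def power2_eq_square)
  also have "\<dots> \<le> chi2_real U r P"
    unfolding chi2_real_def using fin u P by (intro member_le_sum) auto
  finally have pos: "0 < chi2_real U r P" .
  have "0 \<le> chi2_real V (channel_out U W r) (channel_out U W P) / chi2_real U r P"
    using chi2_real_nonneg[OF Q] pos by simp
  then show ?thesis
    using chi2_ratio_le_eta_chi2[OF P Q r pos] by (meson ereal_less_eq(5) order_trans)
qed

lemma chi2_real_channel_le:
  assumes fin: "finite U" and P: "\<forall>u\<in>U. 0 < P u" and Q: "\<forall>v\<in>V. 0 < channel_out U W P v"
    and eta: "eta_chi2 U V P W \<le> ereal e" and r: "is_pmf U r"
  shows "chi2_real V (channel_out U W r) (channel_out U W P) \<le> e * chi2_real U r P"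
proof (cases "chi2_real U r P = 0")
  case True
  then have "channel_out U W r = channel_out U W P"
    using chi2_real_eq_0_imp_eq[OF fin P] unfolding channel_out_def by (auto intro!: sum.cong)
  then show ?thesis using True by (simp add: chi2_real_def)
next
  case False
  then have pos: "0 < chi2_real U r P" using chi2_real_nonneg[OF P] by (simp add: less_le)
  have "ereal (chi2_real V (channel_out U W r) (channel_out U W P) / chi2_real U r P) \<le> ereal e"
    using chi2_ratio_le_eta_chi2[OF P Q r pos] eta by (rule order_trans)
  then show ?thesis using pos by (simp add: pos_divide_le_eq)
qed

text \<open>From chi-squared to KL for a single channel: KL(WR||WP) \<le> chi2(WR||WP) \<le> e chi2(R||P), and
  chi2(R||P) \<le> KL(R||P) / min P by Pinsker; the ordinary data processing inequality caps the constant at 1.\<close>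

lemma kl_sdpi_of_chi2_contraction:
  assumes fin: "finite U" "finite V" and W: "stochastic U V W" and P: "pos_pmf U P"
    and Q: "\<forall>v\<in>V. 0 < channel_out U W P v"
    and e: "0 \<le> e" and m: "0 < m" "\<And>u. u \<in> U \<Longrightarrow> m \<le> P u"
    and H: "\<And>r. is_pmf U r \<Longrightarrow> chi2_real V (channel_out U W r) (channel_out U W P) \<le> e * chi2_real U r P"
  shows "kl_sdpi U V P W (min 1 (e / m))"
proof (rule kl_sdpi_of_pmf_bound[OF fin W])
  fix r :: "_ \<Rightarrow> real" assume r: "is_pmf U r"
  have out_mass: "sum (channel_out U W f) V = 1" if "sum f U = 1" for f
    using channel_out_mass[OF fin W] that by simp
  have out_r: "is_pmf V (channel_out U W r)"
    using r channel_out_nonneg[OF W] out_mass by (simp add: is_pmf_def)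
  have out_P: "pos_pmf V (channel_out U W P)"
    using Q P out_mass by (simp add: pos_pmf_def)
  have "kl_mass V (channel_out U W r) (channel_out U W P) \<le> kl_mass U r P"
    using kl_mass_channel_le[OF fin W] r P by (simp add: is_pmf_def pos_pmf_def)
  then have "kl_real V (channel_out U W r) (channel_out U W P) \<le> kl_real U r P"
    using r out_mass by (simp add: kl_mass_eq_kl_real is_pmf_def)
  moreover have "kl_real V (channel_out U W r) (channel_out U W P) \<le> e / m * kl_real U r P"
  proof -
    have "kl_real V (channel_out U W r) (channel_out U W P) \<le> chi2_real V (channel_out U W r) (channel_out U W P)"
      by (rule kl_real_le_chi2_real[OF out_r out_P])
    also have "\<dots> \<le> e * chi2_real U r P" by (rule H[OF r])
    also have "\<dots> \<le> e * (kl_real U r P / m)"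
      using chi2_real_le_kl_real_div_min[OF fin(1) r P m] e by (intro mult_left_mono)
    finally show ?thesis by simp
  qed
  ultimately show "kl_real V (channel_out U W r) (channel_out U W P) \<le> min 1 (e / m) * kl_real U r P"
    by (cases "1 \<le> e / m") (simp_all add: min_def)
qed

lemma eta_KL_le_of_kl_sdpi:
  assumes fin: "finite U" "finite V" and W: "stochastic U V W" and P: "pos_pmf U P"
    and Q: "\<forall>v\<in>V. 0 < channel_out U W P v" and S: "kl_sdpi U V P W c"
  shows "eta_KL U V P W \<le> ereal c"
proof (rule eta_KL_le)
  show P0: "\<forall>u\<in>U. 0 < P u" using P by (simp add: pos_pmf_def)
  show "\<forall>v\<in>V. 0 < channel_out U W P v" by (rule Q)
  fix R assume R: "is_pmf U R" and pos: "0 < kl_real U R P"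
  have "sum R U = 1" "sum (channel_out U W R) V = 1"
    using R channel_out_mass[OF fin W] by (simp_all add: is_pmf_def)
  then have "kl_real V (channel_out U W R) (channel_out U W P) \<le> c * kl_real U R P"
    using S R unfolding kl_sdpi_def is_pmf_def by (metis kl_mass_eq_kl_real)
  then show "ereal (kl_real V (channel_out U W R) (channel_out U W P) / kl_real U R P) \<le> ereal c"
    using pos by (simp add: pos_divide_le_eq)
qed


section \<open>The i.i.d. channel\<close>

lemma finite_seqs: "finite (seqs n :: 'a::finite list set)"
  unfolding seqs_def using finite_lists_length_eq[of "UNIV :: 'a set" n] by simp

lemma seqs_0: "seqs 0 = {[]}"
  unfolding seqs_def by auto

lemma bij_betw_Cons_seqs: "bij_betw (\<lambda>(x, xs). x # xs) (UNIV \<times> seqs n) (seqs (Suc n))"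
proof (rule bij_betwI')
  fix l :: "'a list" assume "l \<in> seqs (Suc n)"
  then show "\<exists>u\<in>UNIV \<times> seqs n. l = (case u of (x, xs) \<Rightarrow> x # xs)"
    by (cases l) (auto simp: seqs_def)
qed (auto simp: seqs_def)

lemma sum_seqs_Suc: "(\<Sum>l\<in>seqs (Suc n). f l) = (\<Sum>x\<in>UNIV. \<Sum>xs\<in>seqs n. f (x # xs))"
  using sum.reindex_bij_betw[OF bij_betw_Cons_seqs, of f n] by (simp add: sum.cartesian_product')

lemma iid_input_Cons: "iid_input P (Suc n) (x # xs) = marg_X P x * iid_input P n xs"
  unfolding iid_input_def prod.lessThan_Suc_shift by simp

lemma chi2_real_seqs_Suc_product:
  fixes f h :: "'a::finite \<Rightarrow> real" and F G H :: "'a list \<Rightarrow> real"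
  assumes G: "\<forall>xs\<in>seqs n. 0 < G xs" "sum G (seqs n) = 1"
    and F: "\<And>x xs. F (x # xs) = f x * G xs" and H: "\<And>x xs. H (x # xs) = h x * G xs"
  shows "chi2_real (seqs (Suc n)) F H = chi2_real UNIV f h"
proof -
  have "chi2_real (seqs (Suc n)) F H = (\<Sum>x\<in>UNIV. \<Sum>xs\<in>seqs n. (f x - h x)^2 / h x * G xs)"
    unfolding chi2_real_def sum_seqs_Suc F H
  proof (intro sum.cong refl)
    fix x :: 'a and xs :: "'a list" assume "xs \<in> seqs n"
    then have "G xs \<noteq> 0" using G by auto
    moreover have "(f x * G xs - h x * G xs)^2 = G xs * (G xs * (f x - h x)^2)"
      by (simp add: power2_eq_square algebra_simps)
    ultimately show "(f x * G xs - h x * G xs)^2 / (h x * G xs) = (f x - h x)^2 / h x * G xs"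
      by simp
  qed
  also have "\<dots> = (\<Sum>x\<in>UNIV. (f x - h x)^2 / h x * sum G (seqs n))"
    by (simp only: sum_distrib_left)
  finally show ?thesis by (simp add: chi2_real_def G)
qed

locale joint_pmf =
  fixes P :: "'a::finite \<Rightarrow> 'b::finite \<Rightarrow> real"
  assumes nonneg: "\<And>x y. 0 \<le> P x y"
    and sum_eq_1: "(\<Sum>x\<in>UNIV. \<Sum>y\<in>UNIV. P x y) = 1"
    and marg_X_pos: "\<And>x. marg_X P x > 0"
    and marg_Y_pos: "\<And>y. marg_Y P y > 0"
begin

definition cond :: "'a \<Rightarrow> 'b \<Rightarrow> real" where
  "cond x y = P x y / marg_X P x"

lemma iid_channel_Cons: "iid_channel P (Suc n) (x # xs) (y # ys) = cond x y * iid_channel P n xs ys"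
  unfolding iid_channel_def cond_def prod.lessThan_Suc_shift by simp

lemma stochastic_cond: "stochastic UNIV UNIV cond"
  unfolding stochastic_def cond_def using marg_X_pos nonneg
  by (auto intro: divide_nonneg_pos simp: sum_divide_distrib[symmetric] marg_X_def less_imp_neq[symmetric])

lemma channel_out_cond_marg_X: "channel_out UNIV cond (marg_X P) = marg_Y P"
  unfolding channel_out_def cond_def marg_Y_def using marg_X_pos
  by (intro ext sum.cong refl) (simp add: less_imp_neq[symmetric])

lemma pos_pmf_marg_X: "pos_pmf UNIV (marg_X P)"
  unfolding pos_pmf_def using marg_X_pos sum_eq_1 by (simp add: marg_X_def)

lemma iid_input_pos: "iid_input P n xs > 0"
  unfolding iid_input_def using marg_X_pos by (intro prod_pos) auto

lemma iid_input_sum: "(\<Sum>xs\<in>seqs n. iid_input P n xs) = 1"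
proof (induction n)
  case (Suc n)
  then show ?case using pos_pmf_marg_X
    by (simp add: sum_seqs_Suc iid_input_Cons sum_distrib_left[symmetric] pos_pmf_def)
qed (simp add: seqs_0 iid_input_def)

lemma pos_pmf_iid_input: "pos_pmf (seqs n) (iid_input P n)"
  unfolding pos_pmf_def using iid_input_pos iid_input_sum by auto

lemma stochastic_iid_channel: "stochastic (seqs n) (seqs n) (iid_channel P n)"
proof -
  have "0 \<le> iid_channel P n xs ys" for xs ys
    unfolding iid_channel_def using marg_X_pos nonneg by (intro prod_nonneg) (auto intro: divide_nonneg_pos)
  moreover have "(\<Sum>ys\<in>seqs n. iid_channel P n xs ys) = 1" if "xs \<in> seqs n" for xs
    using that
  proof (induction n arbitrary: xs)
    case (Suc n)
    then obtain x xs' where xs: "xs = x # xs'" "xs' \<in> seqs n" by (cases xs) (auto simp: seqs_def)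
    then show ?case using Suc.IH[OF xs(2)] stochastic_cond
      by (simp add: sum_seqs_Suc iid_channel_Cons sum_distrib_left[symmetric] stochastic_def)
  qed (simp add: seqs_0 iid_channel_def)
  ultimately show ?thesis by (simp add: stochastic_def)
qed

lemma channel_out_iid_Cons:
  assumes "\<And>x xs. F (x # xs) = f x * iid_input P n xs"
  shows "channel_out (seqs (Suc n)) (iid_channel P (Suc n)) F (y # ys)
    = channel_out UNIV cond f y * channel_out (seqs n) (iid_channel P n) (iid_input P n) ys"
  unfolding channel_out_def sum_seqs_Suc iid_channel_Cons assms sum_product
  by (intro sum.cong refl) (simp add: algebra_simps)

lemma channel_out_iid_input:
  assumes "ys \<in> seqs n"
  shows "channel_out (seqs n) (iid_channel P n) (iid_input P n) ys = (\<Prod>i<n. marg_Y P (ys ! i))"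
  using assms
proof (induction n arbitrary: ys)
  case (Suc n)
  then obtain y ys' where ys: "ys = y # ys'" "ys' \<in> seqs n" by (cases ys) (auto simp: seqs_def)
  then show ?case
    using Suc.IH[OF ys(2)] channel_out_iid_Cons[OF iid_input_Cons, of n y ys']
    by (simp add: channel_out_cond_marg_X prod.lessThan_Suc_shift del: prod.lessThan_Suc)
qed (simp add: seqs_0 iid_channel_def iid_input_def channel_out_def)

lemma channel_out_iid_input_pos: "\<forall>ys\<in>seqs n. channel_out (seqs n) (iid_channel P n) (iid_input P n) ys > 0"
  using marg_Y_pos by (simp add: channel_out_iid_input prod_pos)

lemma kl_sdpi_iid:
  assumes c1: "c \<le> 1" and S: "kl_sdpi UNIV UNIV (marg_X P) cond c"
  shows "kl_sdpi (seqs n) (seqs n) (iid_input P n) (iid_channel P n) c"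
proof (induction n)
  case 0
  have "iid_input P 0 [] = 1" "channel_out {[]} (iid_channel P 0) (iid_input P 0) [] = 1"
    by (simp_all add: iid_channel_def iid_input_def channel_out_def)
  then show ?case by (simp add: kl_sdpi_def seqs_0 kl_mass_singleton)
next
  case (Suc n)
  have "kl_sdpi (UNIV \<times> seqs n) (UNIV \<times> seqs n) (\<lambda>(x, xs). marg_X P x * iid_input P n xs)
      (\<lambda>(x, xs) (y, ys). cond x y * iid_channel P n xs ys) c"
    using stochastic_cond stochastic_iid_channel marg_X_pos iid_input_pos marg_Y_pos
      channel_out_iid_input_pos S Suc.IH c1
    by (intro kl_sdpi_product) (simp_all add: finite_seqs channel_out_cond_marg_X)
  moreover have "(\<lambda>(x, xs) (y, ys). cond x y * iid_channel P n xs ys)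
      = (\<lambda>u v. iid_channel P (Suc n) ((\<lambda>(x, xs). x # xs) u) ((\<lambda>(x, xs). x # xs) v))"
    by (auto simp: iid_channel_Cons fun_eq_iff)
  ultimately show ?case
    by (intro kl_sdpi_reindex[OF bij_betw_Cons_seqs bij_betw_Cons_seqs])
      (simp add: case_prod_unfold iid_input_Cons)
qed

lemma eta_chi2_marg_le_eta_chi2_iid:
  "eta_chi2 UNIV UNIV (marg_X P) cond
    \<le> eta_chi2 (seqs (Suc n)) (seqs (Suc n)) (iid_input P (Suc n)) (iid_channel P (Suc n))"
proof (rule eta_chi2_le)
  show "\<forall>u\<in>UNIV. 0 < marg_X P u" using marg_X_pos by simp
  show "\<forall>v\<in>UNIV. 0 < channel_out UNIV cond (marg_X P) v"
    using marg_Y_pos by (simp add: channel_out_cond_marg_X)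
  fix r assume r: "is_pmf UNIV r" and pos: "0 < chi2_real UNIV r (marg_X P)"
  \<comment> \<open>Let r be the law of the first input letter and keep the i.i.d. law of the others.\<close>
  define R where "R l = r (hd l) * iid_input P n (tl l)" for l
  define Qn where "Qn = channel_out (seqs n) (iid_channel P n) (iid_input P n)"
  have R_Cons: "R (x # xs) = r x * iid_input P n xs" for x xs by (simp add: R_def)
  have Qn: "\<forall>ys\<in>seqs n. 0 < Qn ys" "sum Qn (seqs n) = 1"
    unfolding Qn_def using channel_out_iid_input_pos iid_input_sum
      channel_out_mass[OF finite_seqs finite_seqs stochastic_iid_channel] by simp_all
  have R: "is_pmf (seqs (Suc n)) R"
    using r iid_input_pos iid_input_sum
    by (simp add: is_pmf_def R_def sum_seqs_Suc sum_distrib_left[symmetric] less_imp_le)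
  have chi_in: "chi2_real (seqs (Suc n)) R (iid_input P (Suc n)) = chi2_real UNIV r (marg_X P)"
    by (intro chi2_real_seqs_Suc_product[where G = "iid_input P n"])
      (simp_all add: R_Cons iid_input_Cons iid_input_pos iid_input_sum)
  have chi_out: "chi2_real (seqs (Suc n)) (channel_out (seqs (Suc n)) (iid_channel P (Suc n)) R)
        (channel_out (seqs (Suc n)) (iid_channel P (Suc n)) (iid_input P (Suc n)))
      = chi2_real UNIV (channel_out UNIV cond r) (marg_Y P)"
    using Qn channel_out_iid_Cons[OF R_Cons] channel_out_iid_Cons[OF iid_input_Cons]
    by (intro chi2_real_seqs_Suc_product[where G = Qn]) (simp_all add: Qn_def channel_out_cond_marg_X)
  have "0 < chi2_real (seqs (Suc n)) R (iid_input P (Suc n))" using chi_in pos by simp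
  from chi2_ratio_le_eta_chi2[OF _ channel_out_iid_input_pos R this] iid_input_pos
  show "ereal (chi2_real UNIV (channel_out UNIV cond r) (channel_out UNIV cond (marg_X P)) / chi2_real UNIV r (marg_X P))
      \<le> eta_chi2 (seqs (Suc n)) (seqs (Suc n)) (iid_input P (Suc n)) (iid_channel P (Suc n))"
    by (simp add: chi_in chi_out channel_out_cond_marg_X)
qed

lemma eta_KL_iid_le:
  assumes E0: "0 \<le> eta_chi2 UNIV UNIV (marg_X P) cond"
  shows "eta_KL (seqs n) (seqs n) (iid_input P n) (iid_channel P n)
    \<le> eta_chi2 UNIV UNIV (marg_X P) cond / ereal (Min (range (marg_X P)))"
proof -
  define m where "m = Min (range (marg_X P))"
  have "m \<in> range (marg_X P)" unfolding m_def by (rule Min_in) auto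
  then have m: "0 < m" using marg_X_pos by auto
  have m_le: "m \<le> marg_X P x" for x unfolding m_def by (rule Min_le) auto
  have Q: "\<forall>y\<in>UNIV. 0 < channel_out UNIV cond (marg_X P) y"
    using marg_Y_pos by (simp add: channel_out_cond_marg_X)
  show ?thesis
  proof (cases "eta_chi2 UNIV UNIV (marg_X P) cond")
    case (real e)
    have "kl_sdpi UNIV UNIV (marg_X P) cond (min 1 (e / m))"
    proof (rule kl_sdpi_of_chi2_contraction[OF _ _ stochastic_cond pos_pmf_marg_X Q _ m m_le])
      show "0 \<le> e" using E0 real by simp
      show "chi2_real UNIV (channel_out UNIV cond r) (channel_out UNIV cond (marg_X P)) \<le> e * chi2_real UNIV r (marg_X P)"
        if "is_pmf UNIV r" for r
        using marg_X_pos Q real that by (intro chi2_real_channel_le) auto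
    qed simp_all
    then have "kl_sdpi (seqs n) (seqs n) (iid_input P n) (iid_channel P n) (min 1 (e / m))"
      by (intro kl_sdpi_iid) simp_all
    then have "eta_KL (seqs n) (seqs n) (iid_input P n) (iid_channel P n) \<le> ereal (min 1 (e / m))"
      using stochastic_iid_channel pos_pmf_iid_input channel_out_iid_input_pos
      by (intro eta_KL_le_of_kl_sdpi) (simp_all add: finite_seqs)
    also have "\<dots> \<le> ereal e / ereal m" using m by simp
    finally show ?thesis using real by (simp add: m_def)
  next
    case PInf
    then show ?thesis using m by (simp add: m_def[symmetric])
  qed (use E0 in simp)
qed

end

theorem corollary1:
  fixes P :: "'a::finite \<Rightarrow> 'b::finite \<Rightarrow> real" and n :: nat
  assumes "CARD('a) \<ge> 2" and "CARD('b) \<ge> 2"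
    and "\<forall>x y. 0 \<le> P x y" and "(\<Sum>x\<in>UNIV. \<Sum>y\<in>UNIV. P x y) = 1"
    and "\<forall>x. marg_X P x > 0" and "\<forall>y. marg_Y P y > 0"
    and "n \<ge> 1"
  shows "eta_chi2 (seqs n) (seqs n) (iid_input P n) (iid_channel P n)
           \<le> eta_KL (seqs n) (seqs n) (iid_input P n) (iid_channel P n)
       \<and> eta_KL (seqs n) (seqs n) (iid_input P n) (iid_channel P n)
           \<le> eta_chi2 (seqs n) (seqs n) (iid_input P n) (iid_channel P n)
               / ereal (Min (range (marg_X P)))"
proof -
  interpret joint_pmf P using assms(3-6) by unfold_locales auto
  obtain k where n: "n = Suc k" using assms(7) by (cases n) auto
  have "\<not> CARD('a) \<le> Suc 0" using assms(1) by simp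
  then obtain x0 x1 :: 'a where "x0 \<noteq> x1" by (auto simp: card_le_Suc0_iff_eq)
  then have "0 \<le> eta_chi2 UNIV UNIV (marg_X P) cond"
    using marg_X_pos marg_Y_pos by (intro eta_chi2_nonneg) (simp_all add: channel_out_cond_marg_X)
  then have "eta_KL (seqs n) (seqs n) (iid_input P n) (iid_channel P n)
      \<le> eta_chi2 UNIV UNIV (marg_X P) cond / ereal (Min (range (marg_X P)))"
    by (rule eta_KL_iid_le)
  also have "\<dots> \<le> eta_chi2 (seqs n) (seqs n) (iid_input P n) (iid_channel P n) / ereal (Min (range (marg_X P)))"
    using eta_chi2_marg_le_eta_chi2_iid marg_X_pos unfolding n
    by (intro ereal_divide_right_mono) (auto intro: Min_in)
  finally show ?thesis
    using stochastic_iid_channel pos_pmf_iid_input channel_out_iid_input_pos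
    by (simp add: eta_chi2_le_eta_KL finite_seqs)
qed

end
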